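(* Let $ABC$ be a nondegenerate triangle, let $P$ be a point not lying on any of the lines $BC$, $CA$, $AB$, and let $XYZ$ be a (nondegenerate) Miquel triangle of $P$ relative to $ABC$. (i) If $P$ lies in the interior of triangle $ABC$, then $P$ lies in the interior of triangle $XYZ$. (ii) If $P$ lies in the exterior of triangle $ABC$, then $P$ lies in the exterior of triangle $XYZ$.
   Context: Miquel triangle: given a triangle $ABC$ and a point $P$ not on the lines $BC,CA,AB$, a triangle $XYZ$ with $X$ on line $BC$, $Y$ on line $CA$, $Z$ on line $AB$ is called a Miquel triangle of $P$ relative to $ABC$ if $P$ lies on each of the three circles through $A,Y,Z$, through $B,Z,X$, and through $C,X,Y$ (the Miquel circles). The pedal triangle of $P$ is one such triangle, and all Miquel triangles of a fixed $P$ are similar to each other. *)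

theory Defs
  imports "HOL-Analysis.Analysis"
begin

text \<open>Points of the Euclidean plane are modelled as complex numbers.
  A finite set of points is concyclic if some circle (positive radius) passes through all of them.\<close>

definition concyclic :: "complex set \<Rightarrow> bool" where
  "concyclic S \<longleftrightarrow> (\<exists>c r. r > 0 \<and> S \<subseteq> sphere c r)"

definition miquel_triangle ::
  "complex \<Rightarrow> complex \<Rightarrow> complex \<Rightarrow> complex \<Rightarrow> complex \<Rightarrow> complex \<Rightarrow> complex \<Rightarrow> bool" where
  "miquel_triangle A B C P X Y Z \<longleftrightarrow>
     X \<in> affine hull {B, C} \<and> Y \<in> affine hull {C, A} \<and> Z \<in> affine hull {A, B} \<and>
     concyclic {A, Y, Z, P} \<and> concyclic {B, Z, X, P} \<and> concyclic {C, X, Y, P}"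

end

theory Submission
  imports Defs
begin

text \<open>Put \<open>P\<close> at the origin. A point \<open>x\<close> on the line \<open>bc\<close> is described by the cotangent \<open>t\<close> of
  the angle between \<open>b - c\<close> and \<open>x\<close>, and concyclicity of \<open>B, X, Z, P\<close> forces the parameters of
  \<open>X\<close> on \<open>BC\<close> and of \<open>Z\<close> on \<open>AB\<close> to agree. So, unless two vertices of \<open>XYZ\<close> are vertices of
  \<open>ABC\<close>, all three parameters equal one \<open>t\<close>, and then the signed areas of \<open>PYZ, PZX, PXY\<close> are
  positive multiples of \<open>D\<beta>\<gamma>, D\<gamma>\<alpha>, D\<alpha>\<beta>\<close>, where \<open>\<alpha>, \<beta>, \<gamma>\<close> are the signed areas of
  \<open>PBC, PCA, PAB\<close> and \<open>D = \<alpha> + \<beta> + \<gamma>\<close> that of \<open>ABC\<close>. If \<open>\<alpha>, \<beta>, \<gamma>\<close> have the sign of \<open>D\<close>, so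
  have these products; if not, the products do not all have a common sign.
  In the remaining case \<open>XYZ = CAZ\<close>, with \<open>Z\<close> the second intersection of \<open>AB\<close> with the circle
  \<open>BCP\<close>, the argument goes through the power of \<open>P\<close> with respect to the circumcircle of \<open>ABC\<close>:
  it is negative if \<open>P\<close> is inside \<open>ABC\<close> and positive if \<open>P\<close> lies in a vertical angle of \<open>ABC\<close>,
  i.e. has two negative barycentric coordinates.\<close>

section \<open>Signed areas and barycentric signs\<close>

definition cross :: "complex \<Rightarrow> complex \<Rightarrow> real" where
  "cross u v = Re u * Im v - Im u * Re v"

lemma collinear_if_cross_eq_0:
  assumes "cross (y - x) (z - x) = 0"
  shows "collinear {x, y, z}"
proof (cases "y = x")
  case False
  have "Im ((z - x) / (y - x)) = 0"
    using assms False by (simp add: cross_def Im_divide field_simps)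
  then have "collinear {0, y - x, z - x}"
    by (simp add: collinear_iff_Reals complex_is_Real_iff)
  moreover have "collinear {y, x, z} \<longleftrightarrow> collinear {0, y - x, z - x}"
    by (rule collinear_3) simp
  ultimately show ?thesis by (simp add: insert_commute)
qed simp

lemma cross_ne_0_if_not_collinear: "\<not> collinear {a, b, c} \<Longrightarrow> cross (b - a) (c - a) \<noteq> 0"
  using collinear_if_cross_eq_0 by blast

lemma not_collinear_imp_distinct: "\<not> collinear {a, b, c} \<Longrightarrow> a \<noteq> b \<and> b \<noteq> c \<and> c \<noteq> a"
  by (auto simp: insert_commute)

lemma cross_ne_0_if_notin_affine_hull:
  assumes "b \<noteq> c" "p \<notin> affine hull {b, c}"
  shows "cross (b - p) (c - p) \<noteq> 0"
proof
  assume "cross (b - p) (c - p) = 0"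
  then have "cross (c - b) (p - b) = 0" by (simp add: cross_def algebra_simps)
  then have "collinear {b, c, p}" by (rule collinear_if_cross_eq_0)
  then show False using assms collinear_3_affine_hull by blast
qed

lemma cross_ne_0_if_off_sidelines:
  assumes "\<not> collinear {a, b, c}"
    and "0 \<notin> affine hull {b, c}" "0 \<notin> affine hull {c, a}" "0 \<notin> affine hull {a, b}"
  shows "cross b c \<noteq> 0" "cross c a \<noteq> 0" "cross a b \<noteq> 0"
  using cross_ne_0_if_notin_affine_hull[of _ _ 0] assms(2-4) not_collinear_imp_distinct[OF assms(1)]
  by auto

lemma affine_hull_2_complexE:
  assumes "x \<in> affine hull {b, c}"
  obtains v :: real where "x = b + of_real v * (c - b)"
proof -
  obtain u v where x: "x = u *\<^sub>R b + v *\<^sub>R c" and "u + v = 1"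
    using assms by (auto simp: affine_hull_2)
  then have "u = 1 - v" by simp
  with x have "x = b + of_real v * (c - b)" by (simp add: scaleR_conv_of_real algebra_simps)
  then show thesis by (rule that)
qed

lemma cross_diff_split:
  "cross (b - a) (c - a) = cross (b - p) (c - p) + cross (c - p) (a - p) + cross (a - p) (b - p)"
  by (simp add: cross_def algebra_simps)

lemma cross_diff_split_0: "cross (b - a) (c - a) = cross b c + cross c a + cross a b"
  using cross_diff_split[of b a c 0] by simp

text \<open>The point with homogeneous barycentric coordinates \<open>(u : v : w)\<close> has the actual coordinates
  \<open>u / (u + v + w)\<close>, \<open>v / (u + v + w)\<close>, \<open>w / (u + v + w)\<close>; the two predicates state that these
  are positive, resp. nonnegative, without dividing.\<close>

definition bary_pos :: "real \<Rightarrow> real \<Rightarrow> real \<Rightarrow> bool" where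
  "bary_pos u v w \<longleftrightarrow> 0 < (u + v + w) * u \<and> 0 < (u + v + w) * v \<and> 0 < (u + v + w) * w"

definition bary_nonneg :: "real \<Rightarrow> real \<Rightarrow> real \<Rightarrow> bool" where
  "bary_nonneg u v w \<longleftrightarrow> 0 \<le> (u + v + w) * u \<and> 0 \<le> (u + v + w) * v \<and> 0 \<le> (u + v + w) * w"

lemma convex_hull_3_iff_bary_nonneg:
  assumes "cross (b - a) (c - a) \<noteq> 0"
  shows "p \<in> convex hull {a, b, c} \<longleftrightarrow>
    bary_nonneg (cross (b - p) (c - p)) (cross (c - p) (a - p)) (cross (a - p) (b - p))"
proof -
  define d where "d = cross (b - a) (c - a)"
  have d_sum: "d = cross (b - p) (c - p) + cross (c - p) (a - p) + cross (a - p) (b - p)"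
    unfolding d_def by (rule cross_diff_split)
  have "d \<noteq> 0" using assms d_def by simp
  show ?thesis unfolding bary_nonneg_def d_sum[symmetric]
  proof
    assume "p \<in> convex hull {a, b, c}"
    then obtain u v w where uvw: "0 \<le> u" "0 \<le> v" "0 \<le> w" "u + v + w = 1"
      and p: "p = u *\<^sub>R a + v *\<^sub>R b + w *\<^sub>R c"
      by (auto simp: convex_hull_3)
    have u: "u = 1 - v - w" using uvw by simp
    have "cross (b - p) (c - p) = u * d" "cross (c - p) (a - p) = v * d"
      "cross (a - p) (b - p) = w * d"
      unfolding p u d_def cross_def by (simp_all add: algebra_simps)
    then show "0 \<le> d * cross (b - p) (c - p) \<and> 0 \<le> d * cross (c - p) (a - p) \<and>
        0 \<le> d * cross (a - p) (b - p)"
      using uvw by (simp add: mult.left_commute[of d])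
  next
    assume signs: "0 \<le> d * cross (b - p) (c - p) \<and> 0 \<le> d * cross (c - p) (a - p) \<and>
      0 \<le> d * cross (a - p) (b - p)"
    define u where "u = cross (b - p) (c - p) / d"
    define v where "v = cross (c - p) (a - p) / d"
    define w where "w = cross (a - p) (b - p) / d"
    have "0 \<le> u" "0 \<le> v" "0 \<le> w"
      using signs \<open>d \<noteq> 0\<close> unfolding u_def v_def w_def
      by (auto simp: zero_le_mult_iff zero_le_divide_iff)
    moreover have "u + v + w = 1"
      unfolding u_def v_def w_def using \<open>d \<noteq> 0\<close> d_sum by (simp add: add_divide_distrib[symmetric])
    moreover have "d *\<^sub>R p =
        cross (b - p) (c - p) *\<^sub>R a + cross (c - p) (a - p) *\<^sub>R b + cross (a - p) (b - p) *\<^sub>R c"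
      unfolding d_def cross_def by (simp add: complex_eq_iff algebra_simps)
    then have "p = u *\<^sub>R a + v *\<^sub>R b + w *\<^sub>R c"
      using \<open>d \<noteq> 0\<close> unfolding u_def v_def w_def
      by (metis (no_types, lifting) scaleR_add_right scaleR_one scaleR_scaleR divide_inverse_commute
          left_inverse)
    ultimately show "p \<in> convex hull {a, b, c}" unfolding convex_hull_3 by blast
  qed
qed

lemma interior_convex_hull_3_if_bary_pos:
  assumes "bary_pos (cross (b - p) (c - p)) (cross (c - p) (a - p)) (cross (a - p) (b - p))"
  shows "p \<in> interior (convex hull {a, b, c})"
proof -
  define d where "d = cross (b - a) (c - a)"
  define U where "U = {q. 0 < d * cross (b - q) (c - q) \<and> 0 < d * cross (c - q) (a - q) \<and>
    0 < d * cross (a - q) (b - q)}"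
  have "open U" unfolding U_def cross_def
    by (intro open_Collect_conj open_Collect_less continuous_intros)
  moreover have "p \<in> U"
    using assms unfolding U_def d_def bary_pos_def cross_diff_split[of b a c p] by simp
  moreover have "U \<subseteq> convex hull {a, b, c}"
  proof
    fix q assume "q \<in> U"
    moreover have "d \<noteq> 0" using \<open>p \<in> U\<close> unfolding U_def by auto
    ultimately show "q \<in> convex hull {a, b, c}"
      using convex_hull_3_iff_bary_nonneg[of b a c q] unfolding U_def d_def bary_nonneg_def
      by (auto simp: cross_diff_split[of b a c q] less_imp_le)
  qed
  ultimately show ?thesis using interior_maximal by blast
qed

definition keeps_inside_outside :: "complex \<Rightarrow> complex set \<Rightarrow> complex set \<Rightarrow> bool" where
  "keeps_inside_outside p S T \<longleftrightarrow>
     (p \<in> interior (convex hull S) \<longrightarrow> p \<in> interior (convex hull T)) \<and>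
     (p \<notin> convex hull S \<longrightarrow> p \<notin> convex hull T)"

lemma keeps_inside_outside_refl: "keeps_inside_outside p S S"
  by (simp add: keeps_inside_outside_def)

lemma keeps_inside_outside_0_if_bary:
  assumes "cross b c \<noteq> 0" "cross c a \<noteq> 0" "cross a b \<noteq> 0"
    and "cross (b - a) (c - a) \<noteq> 0" "cross (y - x) (z - x) \<noteq> 0"
    and pos: "bary_pos (cross b c) (cross c a) (cross a b) \<Longrightarrow>
      bary_pos (cross y z) (cross z x) (cross x y)"
    and nonneg: "bary_nonneg (cross y z) (cross z x) (cross x y) \<Longrightarrow>
      bary_nonneg (cross b c) (cross c a) (cross a b)"
  shows "keeps_inside_outside 0 {a, b, c} {x, y, z}"
proof -
  note abc = convex_hull_3_iff_bary_nonneg[OF assms(4), of 0]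
  note xyz = convex_hull_3_iff_bary_nonneg[OF assms(5), of 0]
  have "cross b c + cross c a + cross a b \<noteq> 0"
    using assms(4) by (simp add: cross_diff_split_0)
  then have "bary_nonneg (cross b c) (cross c a) (cross a b) \<Longrightarrow>
      bary_pos (cross b c) (cross c a) (cross a b)"
    using assms(1-3) unfolding bary_nonneg_def bary_pos_def by (auto simp: order_le_less)
  moreover have "bary_pos (cross y z) (cross z x) (cross x y) \<Longrightarrow>
      0 \<in> interior (convex hull {x, y, z})"
    using interior_convex_hull_3_if_bary_pos[of y 0 z x] by simp
  ultimately show ?thesis
    unfolding keeps_inside_outside_def using abc xyz pos nonneg interior_subset by auto
qed

lemma bary_pos_if_same_sign:
  fixes d u v w :: real
  assumes "0 < d * u" "0 < d * v" "0 < d * w"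
  shows "bary_pos u v w"
  using assms by (auto simp: bary_pos_def zero_less_mult_iff)

lemma same_sign_mult_pos:
  fixes s u v :: real
  assumes "0 \<le> s * u" "0 \<le> s * v" "s \<noteq> 0" "u \<noteq> 0" "v \<noteq> 0"
  shows "0 < u * v"
  using assms by (auto simp: zero_le_mult_iff zero_less_mult_iff)

lemma one_pos_two_neg:
  fixes p q r :: real
  assumes "0 < p * q * r" "\<not> (0 \<le> p \<and> 0 \<le> q \<and> 0 \<le> r)"
  obtains "0 < p" "q < 0" "r < 0" | "0 < q" "r < 0" "p < 0" | "0 < r" "p < 0" "q < 0"
  using assms
  by (cases "0 < p"; cases "0 < q"; cases "0 < r") (auto simp: zero_less_mult_iff mult_less_0_iff)

lemma bary_of_pairwise_products:
  fixes u v w u' v' w' k1 k2 k3 :: real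
  defines "D \<equiv> u + v + w"
  assumes nz: "u \<noteq> 0" "v \<noteq> 0" "w \<noteq> 0" "D \<noteq> 0" "u' + v' + w' \<noteq> 0"
    and k: "0 < k1" "0 < k2" "0 < k3"
    and u': "u' * k1 = D * v * w" and v': "v' * k2 = D * w * u" and w': "w' * k3 = D * u * v"
  shows "bary_pos u v w \<Longrightarrow> bary_pos u' v' w'"
    and "bary_nonneg u' v' w' \<Longrightarrow> bary_nonneg u v w"
proof -
  assume "bary_pos u v w"
  then have pos: "0 < D * u" "0 < D * v" "0 < D * w"
    unfolding bary_pos_def D_def by auto
  have "(D * u') * k1 = (D * v) * (D * w)" "(D * v') * k2 = (D * w) * (D * u)"
    "(D * w') * k3 = (D * u) * (D * v)"
    using u' v' w' by (simp_all add: algebra_simps)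
  then have "0 < D * u'" "0 < D * v'" "0 < D * w'"
    using pos k by (metis mult_pos_pos zero_less_mult_pos2)+
  then show "bary_pos u' v' w'" by (rule bary_pos_if_same_sign)
next
  assume "bary_nonneg u' v' w'"
  then have nonneg: "0 \<le> (u' + v' + w') * u'" "0 \<le> (u' + v' + w') * v'" "0 \<le> (u' + v' + w') * w'"
    unfolding bary_nonneg_def by auto
  have "u' \<noteq> 0" "v' \<noteq> 0" "w' \<noteq> 0" using u' v' w' nz by auto
  then have "0 < u' * v'" "0 < v' * w'" "0 < w' * u'"
    using same_sign_mult_pos nonneg nz(5) by blast+
  moreover have "(u' * v') * (k1 * k2) = (D * w)\<^sup>2 * (u * v)"
    "(v' * w') * (k2 * k3) = (D * u)\<^sup>2 * (v * w)" "(w' * u') * (k3 * k1) = (D * v)\<^sup>2 * (w * u)"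
    using u' v' w' by (simp_all add: power2_eq_square algebra_simps)
  moreover have "0 < (D * w)\<^sup>2" "0 < (D * u)\<^sup>2" "0 < (D * v)\<^sup>2" using nz by simp_all
  ultimately have "0 < u * v" "0 < v * w" "0 < w * u"
    using k by (metis mult_pos_pos zero_less_mult_pos)+
  moreover have "D * u = u\<^sup>2 + u * v + w * u" "D * v = v\<^sup>2 + u * v + v * w"
    "D * w = w\<^sup>2 + v * w + w * u"
    unfolding D_def by (simp_all add: power2_eq_square algebra_simps)
  ultimately have "0 < D * u" "0 < D * v" "0 < D * w"
    using nz by (simp_all add: add_pos_pos)
  then show "bary_nonneg u v w" unfolding bary_nonneg_def D_def by simp
qed

lemma bary_transfer_vertex_case:
  fixes u v w u' v' w' k n q :: real
  defines "D \<equiv> u + v + w"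
  assumes nz: "u \<noteq> 0" "v \<noteq> 0" "w \<noteq> 0" "D \<noteq> 0" "u' + v' + w' \<noteq> 0" and "0 < k" "0 < n"
    and u': "u' * k = u * w * q" and v': "v' * k = n * u * w * D" and w': "w' = v"
    and q_pos: "bary_pos u v w \<Longrightarrow> 0 < D * q"
    and q_neg: "0 < u * v * w * D \<Longrightarrow> \<not> bary_nonneg u v w \<Longrightarrow> D * q < 0"
  shows "bary_pos u v w \<Longrightarrow> bary_pos u' v' w'"
    and "bary_nonneg u' v' w' \<Longrightarrow> bary_nonneg u v w"
proof -
  assume b: "bary_pos u v w"
  then have pos: "0 < D * u" "0 < D * v" "0 < D * w"
    unfolding bary_pos_def D_def by auto
  have "D\<^sup>2 * (u * w) = (D * u) * (D * w)" by (simp add: power2_eq_square algebra_simps)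
  then have "0 < u * w" using pos nz by (metis mult_pos_pos zero_less_power2 zero_less_mult_pos)
  moreover have "(D * u') * k = (u * w) * (D * q)" "(D * v') * k = (n * (u * w)) * D\<^sup>2"
    using u' v' by (simp_all add: power2_eq_square algebra_simps)
  ultimately have "0 < D * u'" "0 < D * v'"
    using q_pos[OF b] \<open>0 < k\<close> \<open>0 < n\<close> nz
    by (metis mult_pos_pos zero_less_mult_pos2,
        metis mult_pos_pos zero_less_power2 zero_less_mult_pos2)
  moreover have "0 < D * w'" using pos w' by simp
  ultimately show "bary_pos u' v' w'" by (rule bary_pos_if_same_sign)
next
  assume "bary_nonneg u' v' w'"
  then have nonneg: "0 \<le> (u' + v' + w') * u'" "0 \<le> (u' + v' + w') * v'" "0 \<le> (u' + v' + w') * w'"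
    unfolding bary_nonneg_def by auto
  have "v' \<noteq> 0" "w' \<noteq> 0" using v' w' nz \<open>0 < k\<close> \<open>0 < n\<close> by auto
  then have "0 < v' * w'" using same_sign_mult_pos nonneg(2,3) nz(5) by blast
  moreover have "k * (v' * w') = n * (u * v * w * D)" using v' w' by (simp add: algebra_simps)
  ultimately have "0 < u * v * w * D"
    using \<open>0 < k\<close> \<open>0 < n\<close> by (metis mult_pos_pos zero_less_mult_pos)
  have "0 \<le> u' * v'"
    using nonneg(1,2) nz(5) by (auto simp: zero_le_mult_iff)
  then have "0 \<le> k\<^sup>2 * (u' * v')" by simp
  moreover have "k\<^sup>2 * (u' * v') = (n * (u * w)\<^sup>2) * (D * q)"
    using u' v' by (simp add: power2_eq_square algebra_simps)
  moreover have "0 < n * (u * w)\<^sup>2" using nz \<open>0 < n\<close> by simp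
  ultimately have "0 \<le> D * q" by (simp add: zero_le_mult_iff)
  then show "bary_nonneg u v w"
    using q_neg \<open>0 < u * v * w * D\<close> by fastforce
qed

section \<open>The Miquel condition\<close>

lemma concyclic_imp_cross_ratio_real:
  assumes "concyclic {u, v, w, 0}"
  shows "Im ((u - v) * cnj (u - w) * cnj v * w) = 0"
proof -
  obtain k r where "{u, v, w, 0} \<subseteq> sphere k r"
    using assms unfolding concyclic_def by blast
  then have "cmod (k - q) = cmod k" if "q \<in> {u, v, w}" for q
    using that by (auto simp: dist_norm)
  then have "(Re k - Re q)\<^sup>2 + (Im k - Im q)\<^sup>2 = (Re k)\<^sup>2 + (Im k)\<^sup>2" if "q \<in> {u, v, w}" for q
    using that by (metis cmod_def minus_complex.simps real_sqrt_eq_iff)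
  from this[of u] this[of v] this[of w] show ?thesis by simp algebra
qed

text \<open>For \<open>x\<close> on the line \<open>bc\<close> (not through \<open>0\<close>) we have \<open>Im (cnj (b - c) * x) = cross b c\<close>, so
  \<open>line_param b c x\<close> is the cotangent of the angle from \<open>b - c\<close> to \<open>x\<close>.\<close>

definition line_param :: "complex \<Rightarrow> complex \<Rightarrow> complex \<Rightarrow> real" where
  "line_param b c x = Re (cnj (b - c) * x) / cross b c"

lemma line_param_eq:
  assumes "x \<in> affine hull {b, c}" "cross b c \<noteq> 0"
  shows "cnj (b - c) * x = of_real (cross b c) * (of_real (line_param b c x) + \<i>)"
proof -
  obtain v where x: "x = b + of_real v * (c - b)"
    using assms(1) by (rule affine_hull_2_complexE)
  have "Im (cnj (b - c) * x) = cross b c" unfolding x by (simp add: cross_def algebra_simps)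
  then show ?thesis using assms(2) by (simp add: line_param_def complex_eq_iff)
qed

lemma line_param_eq_if_concyclic:
  assumes "concyclic {b, x, z, 0}" "x \<in> affine hull {b, c}" "z \<in> affine hull {a, b}"
    and "x \<noteq> b" "z \<noteq> b" "cross b c \<noteq> 0" "cross a b \<noteq> 0"
  shows "line_param b c x = line_param a b z"
proof -
  define t s where "t = line_param b c x" and "s = line_param a b z"
  obtain v where v: "x = b + of_real v * (c - b)" using assms(2) by (rule affine_hull_2_complexE)
  obtain w where w: "z = a + of_real w * (b - a)" using assms(3) by (rule affine_hull_2_complexE)
  have "v \<noteq> 0" "w \<noteq> 1" using assms(4,5) v w by auto
  have "(b - x) * cnj (b - z) * cnj x * z
      = - of_real (v * (1 - w)) * (cnj (cnj (b - c) * x) * (cnj (a - b) * z))"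
    unfolding v w by (simp add: algebra_simps)
  also have "\<dots> = - of_real (v * (1 - w)) *
      (cnj (of_real (cross b c) * (of_real t + \<i>)) * (of_real (cross a b) * (of_real s + \<i>)))"
    unfolding t_def s_def using line_param_eq assms(2,3,6,7) by simp
  finally have "Im ((b - x) * cnj (b - z) * cnj x * z) =
      Im (- of_real (v * (1 - w)) *
        (cnj (of_real (cross b c) * (of_real t + \<i>)) * (of_real (cross a b) * (of_real s + \<i>))))"
    by (rule arg_cong)
  also have "\<dots> = - (v * (1 - w)) * cross b c * cross a b * (t - s)"
    by (simp add: algebra_simps)
  finally have "v * (1 - w) * cross b c * cross a b * (t - s) = 0"
    using concyclic_imp_cross_ratio_real[OF assms(1)] by simp
  then show ?thesis
    using \<open>v \<noteq> 0\<close> \<open>w \<noteq> 1\<close> assms(6,7) unfolding t_def s_def by simp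
qed

section \<open>Miquel triangles with a common line parameter\<close>

lemma cross_of_equal_line_params:
  fixes a b c x y :: complex and t :: real
  assumes "cnj (b - c) * x = of_real (cross b c) * (of_real t + \<i>)"
    and "cnj (c - a) * y = of_real (cross c a) * (of_real t + \<i>)"
  shows "cross x y * ((cmod (b - c))\<^sup>2 * (cmod (c - a))\<^sup>2) =
    (t\<^sup>2 + 1) * cross (b - a) (c - a) * cross b c * cross c a"
proof -
  have "of_real ((cmod (b - c))\<^sup>2 * (cmod (c - a))\<^sup>2) * (cnj x * y)
      = cnj (cnj (b - c) * x) * (cnj (c - a) * y) * (cnj (b - c) * (c - a))"
    unfolding of_real_mult complex_norm_square by (simp add: algebra_simps)
  also have "\<dots> = of_real (cross b c * cross c a) * of_real (t\<^sup>2 + 1) * (cnj (b - c) * (c - a))"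
    unfolding assms by (simp add: complex_eq_iff power2_eq_square algebra_simps)
  finally have "Im (of_real ((cmod (b - c))\<^sup>2 * (cmod (c - a))\<^sup>2) * (cnj x * y))
      = Im (of_real (cross b c * cross c a) * of_real (t\<^sup>2 + 1) * (cnj (b - c) * (c - a)))"
    by simp
  then show ?thesis by (simp add: cross_def algebra_simps)
qed

lemma keeps_inside_outside_0_equal_line_params:
  assumes "\<not> collinear {a, b, c}" "\<not> collinear {x, y, z}"
    and nz: "cross b c \<noteq> 0" "cross c a \<noteq> 0" "cross a b \<noteq> 0"
    and "x \<in> affine hull {b, c}" "y \<in> affine hull {c, a}" "z \<in> affine hull {a, b}"
    and "line_param c a y = line_param b c x" "line_param a b z = line_param b c x"
  shows "keeps_inside_outside 0 {a, b, c} {x, y, z}"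
proof -
  define t where "t = line_param b c x"
  define D where "D = cross b c + cross c a + cross a b"
  have rx: "cnj (b - c) * x = of_real (cross b c) * (of_real t + \<i>)"
    and ry: "cnj (c - a) * y = of_real (cross c a) * (of_real t + \<i>)"
    and rz: "cnj (a - b) * z = of_real (cross a b) * (of_real t + \<i>)"
    using line_param_eq assms(6-10) nz unfolding t_def by metis+
  have D: "cross (b - a) (c - a) = D" "cross (c - b) (a - b) = D" "cross (a - c) (b - c) = D"
    unfolding D_def cross_def by (simp_all add: algebra_simps)
  have sums: "D \<noteq> 0" "cross y z + cross z x + cross x y \<noteq> 0"
    using cross_ne_0_if_not_collinear[OF assms(1)] cross_ne_0_if_not_collinear[OF assms(2)]
    by (simp_all add: D_def cross_diff_split_0)
  have t: "0 < t\<^sup>2 + 1" by (simp add: add_nonneg_pos)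
  have cross_yz:
      "cross y z * ((cmod (c - a))\<^sup>2 * (cmod (a - b))\<^sup>2 / (t\<^sup>2 + 1)) = D * cross c a * cross a b"
    and cross_zx:
      "cross z x * ((cmod (a - b))\<^sup>2 * (cmod (b - c))\<^sup>2 / (t\<^sup>2 + 1)) = D * cross a b * cross b c"
    and cross_xy:
      "cross x y * ((cmod (b - c))\<^sup>2 * (cmod (c - a))\<^sup>2 / (t\<^sup>2 + 1)) = D * cross b c * cross c a"
    using cross_of_equal_line_params[OF ry rz] cross_of_equal_line_params[OF rz rx]
      cross_of_equal_line_params[OF rx ry] t
    by (simp_all add: D field_simps)
  have k: "0 < (cmod (c - a))\<^sup>2 * (cmod (a - b))\<^sup>2 / (t\<^sup>2 + 1)"
    "0 < (cmod (a - b))\<^sup>2 * (cmod (b - c))\<^sup>2 / (t\<^sup>2 + 1)"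
    "0 < (cmod (b - c))\<^sup>2 * (cmod (c - a))\<^sup>2 / (t\<^sup>2 + 1)"
    using not_collinear_imp_distinct[OF assms(1)] t by auto
  note transfer = bary_of_pairwise_products[OF nz sums(1)[unfolded D_def] sums(2) k
      cross_yz[unfolded D_def] cross_zx[unfolded D_def] cross_xy[unfolded D_def]]
  show ?thesis
    by (rule keeps_inside_outside_0_if_bary[OF nz cross_ne_0_if_not_collinear[OF assms(1)]
          cross_ne_0_if_not_collinear[OF assms(2)] transfer])
qed

section \<open>Miquel triangles through two vertices\<close>

text \<open>With \<open>o\<close> and \<open>R\<close> the centre and radius of the circle through \<open>a, b, c\<close>, one has
  \<open>(cross b c + cross c a + cross a b) * incircle_det a b c = D\<^sup>2 (R\<^sup>2 - \<bar>o\<bar>\<^sup>2)\<close> for that sum \<open>D\<close>: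
  its sign tells whether \<open>0\<close> lies inside the circumcircle.\<close>

definition incircle_det :: "complex \<Rightarrow> complex \<Rightarrow> complex \<Rightarrow> real" where
  "incircle_det a b c = (cmod a)\<^sup>2 * cross b c + (cmod b)\<^sup>2 * cross c a + (cmod c)\<^sup>2 * cross a b"

lemma incircle_det_cycle:
  "incircle_det b c a = incircle_det a b c" "incircle_det c a b = incircle_det a b c"
  by (simp_all add: incircle_det_def algebra_simps)

lemma incircle_det_pos_if_bary_pos:
  assumes "bary_pos (cross b c) (cross c a) (cross a b)" "a \<noteq> 0" "b \<noteq> 0" "c \<noteq> 0"
  shows "0 < (cross b c + cross c a + cross a b) * incircle_det a b c"
proof -
  define D where "D = cross b c + cross c a + cross a b"
  have "D * incircle_det a b c =
      (cmod a)\<^sup>2 * (D * cross b c) + (cmod b)\<^sup>2 * (D * cross c a) + (cmod c)\<^sup>2 * (D * cross a b)"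
    unfolding incircle_det_def by (simp add: algebra_simps)
  then show ?thesis
    using assms unfolding bary_pos_def D_def[symmetric] by (simp add: add_pos_pos)
qed

lemma cross_mult_incircle_det:
  fixes a b c :: complex
  defines "D \<equiv> cross b c + cross c a + cross a b"
  shows "cross b c * incircle_det a b c =
    D * (cross c a * (cmod b)\<^sup>2 + cross a b * (cmod c)\<^sup>2) - cross c a * cross a b * (cmod (b - c))\<^sup>2"
  unfolding D_def incircle_det_def cross_def cmod_power2 by (simp add: algebra_simps) algebra

lemma incircle_det_neg_if_two_bary_neg:
  fixes a b c :: complex
  defines "D \<equiv> cross b c + cross c a + cross a b"
  assumes "0 < cross b c * cross c a * cross a b * D"
    and "\<not> bary_nonneg (cross b c) (cross c a) (cross a b)"
    and "a \<noteq> b" "b \<noteq> c" "c \<noteq> a"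
  shows "D * incircle_det a b c < 0"
proof -
  define Q where "Q = incircle_det a b c"
  have neg: "D * Q < 0"
    if "u * Q = D * (v * (cmod b')\<^sup>2 + w * (cmod c')\<^sup>2) - v * w * (cmod (b' - c'))\<^sup>2"
      and "0 < D * u" "D * v < 0" "D * w < 0" "b' \<noteq> c'" for u v w :: real and b' c' :: complex
  proof -
    have "(D * u) * (D * Q) = D\<^sup>2 * (u * Q)" by (simp add: power2_eq_square)
    also have "\<dots> = D\<^sup>2 * (D * (v * (cmod b')\<^sup>2 + w * (cmod c')\<^sup>2) - v * w * (cmod (b' - c'))\<^sup>2)"
      using that(1) by simp
    also have "\<dots> = D\<^sup>2 * ((D * v) * (cmod b')\<^sup>2 + (D * w) * (cmod c')\<^sup>2)
        - (D * v) * (D * w) * (cmod (b' - c'))\<^sup>2"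
      by (simp add: power2_eq_square algebra_simps)
    also have "\<dots> < 0"
    proof -
      have "(D * v) * (cmod b')\<^sup>2 + (D * w) * (cmod c')\<^sup>2 \<le> 0"
        using that(3,4) by (simp add: add_nonpos_nonpos mult_nonpos_nonneg)
      then have "D\<^sup>2 * ((D * v) * (cmod b')\<^sup>2 + (D * w) * (cmod c')\<^sup>2) \<le> 0"
        by (simp add: mult_nonneg_nonpos)
      moreover have "0 < (D * v) * (D * w) * (cmod (b' - c'))\<^sup>2"
        using that(3-5) by (simp add: mult_neg_neg)
      ultimately show ?thesis by linarith
    qed
    finally show ?thesis using that(2) mult_nonneg_nonneg[of "D * u" "D * Q"] by linarith
  qed
  have "D \<noteq> 0" using assms(2) by auto
  have "(D * cross b c) * (D * cross c a) * (D * cross a b) =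
      D\<^sup>2 * (cross b c * cross c a * cross a b * D)"
    by (simp add: power2_eq_square algebra_simps)
  moreover have "0 < D\<^sup>2" using \<open>D \<noteq> 0\<close> by simp
  ultimately have "0 < (D * cross b c) * (D * cross c a) * (D * cross a b)"
    using mult_pos_pos[OF _ assms(2)] by metis
  moreover have "\<not> (0 \<le> D * cross b c \<and> 0 \<le> D * cross c a \<and> 0 \<le> D * cross a b)"
    using assms(3) unfolding bary_nonneg_def D_def by simp
  ultimately consider
      "0 < D * cross b c" "D * cross c a < 0" "D * cross a b < 0"
    | "0 < D * cross c a" "D * cross a b < 0" "D * cross b c < 0"
    | "0 < D * cross a b" "D * cross b c < 0" "D * cross c a < 0"
    by (rule one_pos_two_neg)
  then show ?thesis
  proof cases
    case 1
    moreover have "cross b c * Q = D * (cross c a * (cmod b)\<^sup>2 + cross a b * (cmod c)\<^sup>2)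
        - cross c a * cross a b * (cmod (b - c))\<^sup>2"
      unfolding Q_def D_def by (rule cross_mult_incircle_det)
    ultimately show ?thesis using neg assms(5) unfolding Q_def by blast
  next
    case 2
    moreover have "cross c a * Q = D * (cross a b * (cmod c)\<^sup>2 + cross b c * (cmod a)\<^sup>2)
        - cross a b * cross b c * (cmod (c - a))\<^sup>2"
      using cross_mult_incircle_det[where a = b and b = c and c = a] incircle_det_cycle[of a b c]
      unfolding Q_def D_def by (simp add: add_ac)
    ultimately show ?thesis using neg assms(6) unfolding Q_def by blast
  next
    case 3
    moreover have "cross a b * Q = D * (cross b c * (cmod a)\<^sup>2 + cross c a * (cmod b)\<^sup>2)
        - cross b c * cross c a * (cmod (a - b))\<^sup>2"
      using cross_mult_incircle_det[where a = c and b = a and c = b] incircle_det_cycle[of a b c]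
      unfolding Q_def D_def by (simp add: add_ac)
    ultimately show ?thesis using neg assms(4) unfolding Q_def by blast
  qed
qed

lemma cross_of_vertex_line_params:
  fixes a b c z :: complex and t :: real
  assumes rc: "cnj (b - c) * c = of_real (cross b c) * (of_real t + \<i>)"
    and rz: "cnj (a - b) * z = of_real (cross a b) * (of_real t + \<i>)"
  defines "k \<equiv> (cmod (a - b))\<^sup>2 * (cross b c)\<^sup>2"
  shows "cross a z * k = cross b c * cross a b * incircle_det a b c"
    and "cross z c * k = (cmod c)\<^sup>2 * cross b c * cross a b * (cross b c + cross c a + cross a b)"
proof -
  define N where "N = (cmod (a - b))\<^sup>2"
  have z: "of_real (N * cross b c) * z = (a - b) * of_real (cross a b) * (cnj (b - c) * c)"
  proof -
    have "of_real N * z = (a - b) * (cnj (a - b) * z)"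
      unfolding N_def complex_norm_square by (simp add: algebra_simps)
    then have "of_real (N * cross b c) * z =
        of_real (cross b c) * ((a - b) * (of_real (cross a b) * (of_real t + \<i>)))"
      unfolding rz by simp
    also have "\<dots> = (a - b) * of_real (cross a b) * (of_real (cross b c) * (of_real t + \<i>))"
      by (simp add: algebra_simps)
    finally show ?thesis unfolding rc .
  qed
  have "N * cross b c * cross a z = cross a (of_real (N * cross b c) * z)"
    unfolding cross_def by (simp add: algebra_simps)
  also have "\<dots> = cross a ((a - b) * of_real (cross a b) * (cnj (b - c) * c))"
    unfolding z ..
  also have "\<dots> = cross a b * incircle_det a b c"
    unfolding incircle_det_def cross_def cmod_power2 by (simp add: algebra_simps) algebra
  finally have az: "N * cross b c * cross a z = cross a b * incircle_det a b c" .
  have "N * cross b c * cross z c = cross (of_real (N * cross b c) * z) c"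
    unfolding cross_def by (simp add: algebra_simps)
  also have "\<dots> = cross ((a - b) * of_real (cross a b) * (cnj (b - c) * c)) c"
    unfolding z ..
  also have "\<dots> = (cmod c)\<^sup>2 * cross a b * (cross b c + cross c a + cross a b)"
    unfolding cross_def cmod_power2 by (simp add: algebra_simps) algebra
  finally have zc: "N * cross b c * cross z c =
      (cmod c)\<^sup>2 * cross a b * (cross b c + cross c a + cross a b)" .
  have "cross a z * k = cross b c * (N * cross b c * cross a z)"
    "cross z c * k = cross b c * (N * cross b c * cross z c)"
    unfolding k_def N_def by (simp_all add: power2_eq_square algebra_simps)
  then show "cross a z * k = cross b c * cross a b * incircle_det a b c"
    and "cross z c * k = (cmod c)\<^sup>2 * cross b c * cross a b * (cross b c + cross c a + cross a b)"
    unfolding az zc by (simp_all add: algebra_simps)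
qed

lemma keeps_inside_outside_0_vertex_case:
  assumes "\<not> collinear {a, b, c}" "\<not> collinear {c, a, z}"
    and nz: "cross b c \<noteq> 0" "cross c a \<noteq> 0" "cross a b \<noteq> 0"
    and "z \<in> affine hull {a, b}" "z \<noteq> b" "concyclic {b, c, z, 0}"
  shows "keeps_inside_outside 0 {a, b, c} {c, a, z}"
proof -
  define D where "D = cross b c + cross c a + cross a b"
  define Q where "Q = incircle_det a b c"
  have ne: "a \<noteq> b" "b \<noteq> c" "c \<noteq> a" using not_collinear_imp_distinct[OF assms(1)] by auto
  have nz0: "a \<noteq> 0" "b \<noteq> 0" "c \<noteq> 0" using nz by (auto simp: cross_def)
  have c_line: "c \<in> affine hull {b, c}" by (simp add: hull_inc)
  have "line_param a b z = line_param b c c"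
    using line_param_eq_if_concyclic[OF assms(8) c_line assms(6)] ne assms(7) nz by metis
  then have crosses: "cross a z * ((cmod (a - b))\<^sup>2 * (cross b c)\<^sup>2) = cross b c * cross a b * Q"
    "cross z c * ((cmod (a - b))\<^sup>2 * (cross b c)\<^sup>2) = (cmod c)\<^sup>2 * cross b c * cross a b * D"
    using cross_of_vertex_line_params[OF line_param_eq[OF c_line nz(1)]]
      line_param_eq[OF assms(6) nz(3)]
    unfolding D_def Q_def by simp_all
  have k: "0 < (cmod (a - b))\<^sup>2 * (cross b c)\<^sup>2" "0 < (cmod c)\<^sup>2" using ne nz nz0 by simp_all
  have sums: "D \<noteq> 0" "cross a z + cross z c + cross c a \<noteq> 0"
    using cross_ne_0_if_not_collinear[OF assms(1)] cross_ne_0_if_not_collinear[OF assms(2)]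
    unfolding D_def by (simp_all add: cross_diff_split_0 add_ac)
  have Q_pos: "bary_pos (cross b c) (cross c a) (cross a b) \<Longrightarrow> 0 < D * Q"
    unfolding D_def Q_def using incircle_det_pos_if_bary_pos nz0 by blast
  have Q_neg: "0 < cross b c * cross c a * cross a b * D \<Longrightarrow>
      \<not> bary_nonneg (cross b c) (cross c a) (cross a b) \<Longrightarrow> D * Q < 0"
    unfolding D_def Q_def using incircle_det_neg_if_two_bary_neg ne by blast
  note transfer = bary_transfer_vertex_case[OF nz sums(1)[unfolded D_def] sums(2) k
      crosses(1) crosses(2)[unfolded D_def] refl Q_pos[unfolded D_def] Q_neg[unfolded D_def]]
  show ?thesis
    by (rule keeps_inside_outside_0_if_bary[OF nz cross_ne_0_if_not_collinear[OF assms(1)]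
          cross_ne_0_if_not_collinear[OF assms(2)] transfer])
qed

lemma miquel_triangle_rotate: "miquel_triangle a b c p x y z \<Longrightarrow> miquel_triangle b c a p y z x"
  by (simp add: miquel_triangle_def insert_commute)

lemma miquel_triangle_reflect: "miquel_triangle a b c p x y z \<Longrightarrow> miquel_triangle a c b p x z y"
  by (simp add: miquel_triangle_def insert_commute)

lemma miquel_line_params_cases:
  assumes "\<not> collinear {a, b, c}"
    and "0 \<notin> affine hull {b, c}" "0 \<notin> affine hull {c, a}" "0 \<notin> affine hull {a, b}"
    and "miquel_triangle a b c 0 x y z" "\<not> collinear {x, y, z}"
  shows "(line_param c a y = line_param b c x \<and> line_param a b z = line_param b c x) \<or>
    (x = c \<and> y = a) \<or> (y = a \<and> z = b) \<or> (z = b \<and> x = c) \<or>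
    (x = b \<and> z = a) \<or> (z = a \<and> y = c) \<or> (y = c \<and> x = b)"
proof -
  have lines: "x \<in> affine hull {b, c}" "y \<in> affine hull {c, a}" "z \<in> affine hull {a, b}"
    and circles: "concyclic {a, z, y, 0}" "concyclic {b, x, z, 0}" "concyclic {c, y, x, 0}"
    using assms(5) by (simp_all add: miquel_triangle_def insert_commute)
  have ne: "a \<noteq> b" "b \<noteq> c" "c \<noteq> a" using not_collinear_imp_distinct[OF assms(1)] by auto
  note nz = cross_ne_0_if_off_sidelines[OF assms(1-4)]
  have at_b: "x = b \<or> z = b \<or> line_param b c x = line_param a b z"
    using line_param_eq_if_concyclic[OF circles(2) lines(1) lines(3) _ _ nz(1) nz(3)] by blast
  have at_c: "y = c \<or> x = c \<or> line_param c a y = line_param b c x"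
    using line_param_eq_if_concyclic[OF circles(3) lines(2) lines(1) _ _ nz(2) nz(1)] by blast
  have at_a: "z = a \<or> y = a \<or> line_param a b z = line_param c a y"
    using line_param_eq_if_concyclic[OF circles(1) lines(3) lines(2) _ _ nz(3) nz(2)] by blast
  have not_on_line: "\<not> {x, y, z} \<subseteq> affine hull {p, q}" for p q
    using assms(6) collinear_affine_hull by blast
  have "\<not> (x = b \<and> y = a)" "\<not> (x = c \<and> z = a)" "\<not> (y = c \<and> z = b)"
    using not_on_line[of a b] not_on_line[of c a] not_on_line[of b c] lines by (auto simp: hull_inc)
  then show ?thesis using at_a at_b at_c ne by metis
qed

lemma miquel_keeps_inside_outside_0_vertex_case:
  assumes "\<not> collinear {a, b, c}"
    and "0 \<notin> affine hull {b, c}" "0 \<notin> affine hull {c, a}" "0 \<notin> affine hull {a, b}"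
    and "miquel_triangle a b c 0 x y z" "\<not> collinear {x, y, z}" "x = c" "y = a"
  shows "keeps_inside_outside 0 {a, b, c} {x, y, z}"
proof (cases "z = b")
  case True
  then show ?thesis
    using assms(7,8) keeps_inside_outside_refl by (simp add: insert_commute)
next
  case False
  then show ?thesis
    using keeps_inside_outside_0_vertex_case[OF assms(1) _
        cross_ne_0_if_off_sidelines[OF assms(1-4)] _ False] assms(5-8)
    by (simp add: miquel_triangle_def insert_commute)
qed

lemma miquel_keeps_inside_outside_0:
  assumes "\<not> collinear {a, b, c}"
    and "0 \<notin> affine hull {b, c}" "0 \<notin> affine hull {c, a}" "0 \<notin> affine hull {a, b}"
    and "miquel_triangle a b c 0 x y z" "\<not> collinear {x, y, z}"
  shows "keeps_inside_outside 0 {a, b, c} {x, y, z}"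
  using miquel_line_params_cases[OF assms]
proof (elim disjE conjE)
  assume "line_param c a y = line_param b c x" "line_param a b z = line_param b c x"
  then show ?thesis
    using keeps_inside_outside_0_equal_line_params cross_ne_0_if_off_sidelines[OF assms(1-4)]
      assms(1,5,6)
    by (auto simp: miquel_triangle_def)
next
  assume "x = c" "y = a"
  then show ?thesis using miquel_keeps_inside_outside_0_vertex_case[OF assms] by blast
next
  assume "y = a" "z = b"
  then show ?thesis
    using miquel_keeps_inside_outside_0_vertex_case[OF _ _ _ _
        miquel_triangle_rotate[OF assms(5)]] assms
    by (simp add: insert_commute)
next
  assume "z = b" "x = c"
  then show ?thesis
    using miquel_keeps_inside_outside_0_vertex_case[OF _ _ _ _
        miquel_triangle_rotate[OF miquel_triangle_rotate[OF assms(5)]]] assms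
    by (simp add: insert_commute)
next
  assume "x = b" "z = a"
  then show ?thesis
    using miquel_keeps_inside_outside_0_vertex_case[OF _ _ _ _
        miquel_triangle_reflect[OF assms(5)]] assms
    by (simp add: insert_commute)
next
  assume "z = a" "y = c"
  then show ?thesis
    using miquel_keeps_inside_outside_0_vertex_case[OF _ _ _ _
        miquel_triangle_rotate[OF miquel_triangle_reflect[OF assms(5)]]] assms
    by (simp add: insert_commute)
next
  assume "y = c" "x = b"
  then show ?thesis
    using miquel_keeps_inside_outside_0_vertex_case[OF _ _ _ _
        miquel_triangle_rotate[OF miquel_triangle_rotate[OF miquel_triangle_reflect[OF assms(5)]]]]
      assms
    by (simp add: insert_commute)
qed

lemma keeps_inside_outside_translate:
  "keeps_inside_outside p S T \<longleftrightarrow> keeps_inside_outside 0 ((\<lambda>x. x - p) ` S) ((\<lambda>x. x - p) ` T)"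
proof -
  have hull: "convex hull ((\<lambda>x. x - p) ` K) = (\<lambda>x. x - p) ` (convex hull K)" for K :: "complex set"
    using convex_hull_translation[of "- p" K] by (simp cong: image_cong_simp)
  have zero: "0 \<in> (\<lambda>x. x - p) ` K \<longleftrightarrow> p \<in> K" for K :: "complex set"
    by force
  show ?thesis
    unfolding keeps_inside_outside_def hull interior_translation_subtract zero ..
qed

lemma concyclic_translate:
  assumes "concyclic S"
  shows "concyclic ((\<lambda>x. x - p) ` S)"
proof -
  obtain c r where "r > 0" "S \<subseteq> sphere c r" using assms unfolding concyclic_def by blast
  then have "(\<lambda>x. x - p) ` S \<subseteq> sphere (c - p) r" by (auto simp: dist_norm)
  then show ?thesis using \<open>r > 0\<close> unfolding concyclic_def by blast
qed

lemma affine_hull_2_translate: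
  fixes b c p x :: "'a::real_vector"
  shows "x - p \<in> affine hull {b - p, c - p} \<longleftrightarrow> x \<in> affine hull {b, c}"
proof -
  have "affine hull {b - p, c - p} = (\<lambda>y. - p + y) ` (affine hull {b, c})"
    using affine_hull_translation[of "- p" "{b, c}"] by simp
  then show ?thesis by (auto simp: image_iff)
qed

lemma miquel_triangle_translate:
  assumes "miquel_triangle A B C P X Y Z"
  shows "miquel_triangle (A - P) (B - P) (C - P) 0 (X - P) (Y - P) (Z - P)"
proof -
  have "concyclic {U - P, V - P, W - P, 0}" if "concyclic {U, V, W, P}" for U V W
    using concyclic_translate[OF that, of P] by simp
  then show ?thesis using assms unfolding miquel_triangle_def affine_hull_2_translate by blast
qed

theorem lemma1:
  fixes A B C P X Y Z :: complex
  assumes "\<not> collinear {A, B, C}"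
    and "P \<notin> affine hull {B, C}" and "P \<notin> affine hull {C, A}" and "P \<notin> affine hull {A, B}"
    and "miquel_triangle A B C P X Y Z"
    and "\<not> collinear {X, Y, Z}"
  shows "(P \<in> interior (convex hull {A, B, C}) \<longrightarrow> P \<in> interior (convex hull {X, Y, Z})) \<and>
         (P \<notin> convex hull {A, B, C} \<longrightarrow> P \<notin> convex hull {X, Y, Z})"
proof -
  have "\<not> collinear {A - P, B - P, C - P}" "\<not> collinear {X - P, Y - P, Z - P}"
    using assms(1,6) by (simp_all add: collinear_3)
  moreover have "0 \<notin> affine hull {B - P, C - P}" "0 \<notin> affine hull {C - P, A - P}"
    "0 \<notin> affine hull {A - P, B - P}"
    using assms(2-4) affine_hull_2_translate[where x = P and p = P] by simp_all
  ultimately have "keeps_inside_outside 0 {A - P, B - P, C - P} {X - P, Y - P, Z - P}"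
    using miquel_keeps_inside_outside_0 miquel_triangle_translate[OF assms(5)] by blast
  then show ?thesis
    using keeps_inside_outside_translate[of P "{A, B, C}" "{X, Y, Z}"]
    unfolding keeps_inside_outside_def by simp
qed

end
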